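(* Let $m\ge1$ be an integer, $\Gamma_1,\Gamma_2$ co-prime integers with $1<\Gamma_1<\Gamma_2$, $m_1=m\Gamma_1$, $m_2=m\Gamma_2$, let $1\le j\le K+1$ and put $X=\min\big(m_2(1+\ddot n_{2,j}),\,m_1(1+\ddot n_{1,j})\big)$. (a) For every integer $N$ with $0\le N<X$ and every pair of erroneous remainders $\tilde r_1,\tilde r_2$ of $N$ whose errors satisfy $$-\frac{\sigma_j}{2}\le\frac{\Delta r_1-\Delta r_2}{m}<\frac{\sigma_j}{2},$$ Algorithm 2 (with index $j$) returns $\hat n_1=n_1$ and $\hat n_2=n_2$. (b) (Sharpness) For $N=X$ there exist erroneous remainders $\tilde r_1,\tilde r_2$ of $N$ whose errors satisfy the same condition, for which Algorithm 2 returns $(\hat n_1,\hat n_2)\ne(n_1,n_2)$.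
   Context: $|a|_b$ is the remainder of the integer $a$ modulo the positive integer $b$; $[x]=\lfloor x+1/2\rfloor$. For an integer $N\ge0$: folding integers $n_i=\lfloor N/m_i\rfloor$, remainders $r_i=N-n_im_i$; erroneous remainders are integers $\tilde r_i$ with $0\le\tilde r_i<m_i$, errors $\Delta r_i=\tilde r_i-r_i$. Euclidean sequence: $\sigma_{-1}=\Gamma_2$, $\sigma_0=\Gamma_1$, $\sigma_i=|\sigma_{i-2}|_{\sigma_{i-1}}$ for $i\ge1$; $K\ge0$ is the index with $\sigma_K>1$, $\sigma_{K+1}=1$. For $1\le n<\Gamma_1$, $S_{2,n}=\{|t\Gamma_2|_{\Gamma_1}:0\le t\le n\}$, $d_{2,n}$ = minimum distance between distinct elements of $S_{2,n}$; for $1\le n<\Gamma_2$, $S_{1,n}=\{|t\Gamma_1|_{\Gamma_2}:0\le t\le n\}$, $d_{1,n}$ likewise. $\ddot n_{2,j}=\max\{n:1\le n<\Gamma_1,\ d_{2,n}\ge\sigma_j\}$, $\ddot n_{1,j}=\max\{n:1\le n<\Gamma_2,\ d_{1,n}\ge\sigma_j\}$. $\bar\Gamma_{21}$ is the inverse of $\Gamma_2$ modulo $\Gamma_1$, $\bar\Gamma_{12}$ the inverse of $\Gamma_1$ modulo $\Gamma_2$. Algorithm 2 (index $j$, input $\tilde r_1,\tilde r_2$): compute $\mathbf q_{21}=(\tilde r_1-\tilde r_2)/m$. (i) If $\mathbf q_{21}\ge\sigma_j/2$: if some $x\in S_{2,\ddot n_{2,j}}$ satisfies $-\sigma_j/2\le\mathbf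 q_{21}-x<\sigma_j/2$, let $s_2=x$; otherwise let $s_2$ be an element of $S_{2,\ddot n_{2,j}}$ at minimum distance from $\mathbf q_{21}$. Let $\hat n_2\in[0,\Gamma_1)$ with $\hat n_2\equiv s_2\bar\Gamma_{21}\pmod{\Gamma_1}$ and $\hat n_1=[(\hat n_2m_2+\tilde r_2-\tilde r_1)/m_1]$. (ii) If $\mathbf q_{21}<-\sigma_j/2$: if some $y\in S_{1,\ddot n_{1,j}}$ satisfies $-\sigma_j/2\le\mathbf q_{21}+y<\sigma_j/2$, let $s_1=y$; otherwise let $s_1$ be an element of $S_{1,\ddot n_{1,j}}$ at minimum distance from $-\mathbf q_{21}$. Let $\hat n_1\in[0,\Gamma_2)$ with $\hat n_1\equiv s_1\bar\Gamma_{12}\pmod{\Gamma_2}$ and $\hat n_2=[(\hat n_1m_1+\tilde r_1-\tilde r_2)/m_2]$. (iii) If $-\sigma_j/2\le\mathbf q_{21}<\sigma_j/2$: $\hat n_1=\hat n_2=0$. *)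

theory Defs
  imports "HOL-Number_Theory.Number_Theory"
begin

text \<open>Euclidean sequence, shifted by one: euc G1 G2 0 = sigma_(-1) = G2,
  euc G1 G2 1 = sigma_0 = G1, and sigma_i = sigma_(i-2) mod sigma_(i-1).\<close>
fun euc :: "int \<Rightarrow> int \<Rightarrow> nat \<Rightarrow> int" where
  "euc G1 G2 0 = G2"
| "euc G1 G2 (Suc 0) = G1"
| "euc G1 G2 (Suc (Suc n)) = euc G1 G2 n mod euc G1 G2 (Suc n)"

definition sigma :: "int \<Rightarrow> int \<Rightarrow> nat \<Rightarrow> int" where
  "sigma G1 G2 i = euc G1 G2 (Suc i)"

definition bracket :: "real \<Rightarrow> int" where
  "bracket x = \<lfloor>x + 1/2\<rfloor>"

definition S2 :: "int \<Rightarrow> int \<Rightarrow> int \<Rightarrow> int set" where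
  "S2 G1 G2 n = {(t * G2) mod G1 | t. 0 \<le> t \<and> t \<le> n}"

definition S1 :: "int \<Rightarrow> int \<Rightarrow> int \<Rightarrow> int set" where
  "S1 G1 G2 n = {(t * G1) mod G2 | t. 0 \<le> t \<and> t \<le> n}"

definition mindist :: "int set \<Rightarrow> int" where
  "mindist S = Min {\<bar>x - y\<bar> | x y. x \<in> S \<and> y \<in> S \<and> x \<noteq> y}"

definition nn2 :: "int \<Rightarrow> int \<Rightarrow> nat \<Rightarrow> int" where
  "nn2 G1 G2 j = Max {n. 1 \<le> n \<and> n < G1 \<and> mindist (S2 G1 G2 n) \<ge> sigma G1 G2 j}"

definition nn1 :: "int \<Rightarrow> int \<Rightarrow> nat \<Rightarrow> int" where
  "nn1 G1 G2 j = Max {n. 1 \<le> n \<and> n < G2 \<and> mindist (S1 G1 G2 n) \<ge> sigma G1 G2 j}"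

definition inv_mod :: "int \<Rightarrow> int \<Rightarrow> int" where
  "inv_mod a b = (SOME g. 0 \<le> g \<and> g < b \<and> [a * g = 1] (mod b))"

text \<open>Algorithm 2 as a relation: alg2 m G1 G2 j r1t r2t (n1hat, n2hat) holds iff
  (n1hat, n2hat) is a possible output of Algorithm 2 (index j) on input r1t, r2t
  (the algorithm may choose among several nearest elements).\<close>
definition alg2 :: "int \<Rightarrow> int \<Rightarrow> int \<Rightarrow> nat \<Rightarrow> int \<Rightarrow> int \<Rightarrow> int \<times> int \<Rightarrow> bool" where
  "alg2 m G1 G2 j r1t r2t out \<longleftrightarrow>
    (let q = real_of_int (r1t - r2t) / real_of_int m;
         s = real_of_int (sigma G1 G2 j);
         m1 = m * G1; m2 = m * G2;
         A = S2 G1 G2 (nn2 G1 G2 j);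
         B = S1 G1 G2 (nn1 G1 G2 j)
     in (q \<ge> s / 2 \<and>
          (\<exists>s2. s2 \<in> A \<and>
             (if (\<exists>x\<in>A. - s / 2 \<le> q - x \<and> q - x < s / 2)
              then - s / 2 \<le> q - s2 \<and> q - s2 < s / 2
              else (\<forall>y\<in>A. \<bar>q - s2\<bar> \<le> \<bar>q - y\<bar>)) \<and>
             snd out = (s2 * inv_mod G2 G1) mod G1 \<and>
             fst out = bracket (real_of_int (snd out * m2 + r2t - r1t) / real_of_int m1)))
      \<or> (q < - s / 2 \<and>
          (\<exists>s1. s1 \<in> B \<and>
             (if (\<exists>y\<in>B. - s / 2 \<le> q + y \<and> q + y < s / 2)
              then - s / 2 \<le> q + s1 \<and> q + s1 < s / 2
              else (\<forall>y\<in>B. \<bar>- q - s1\<bar> \<le> \<bar>- q - y\<bar>)) \<and>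
             fst out = (s1 * inv_mod G1 G2) mod G2 \<and>
             snd out = bracket (real_of_int (fst out * m1 + r1t - r2t) / real_of_int m2)))
      \<or> (- s / 2 \<le> q \<and> q < s / 2 \<and> out = (0, 0)))"

definition admissible :: "int \<Rightarrow> int \<Rightarrow> int \<Rightarrow> nat \<Rightarrow> int \<Rightarrow> int \<Rightarrow> int \<Rightarrow> bool" where
  "admissible m G1 G2 j N r1t r2t \<longleftrightarrow>
    0 \<le> r1t \<and> r1t < m * G1 \<and> 0 \<le> r2t \<and> r2t < m * G2 \<and>
    (let d1 = r1t - N mod (m * G1); d2 = r2t - N mod (m * G2);
         e = real_of_int (d1 - d2) / real_of_int m;
         s = real_of_int (sigma G1 G2 j)
     in - s / 2 \<le> e \<and> e < s / 2)"

definition bigX :: "int \<Rightarrow> int \<Rightarrow> int \<Rightarrow> nat \<Rightarrow> int" where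
  "bigX m G1 G2 j = min (m * G2 * (1 + nn2 G1 G2 j)) (m * G1 * (1 + nn1 G1 G2 j))"

end

theory Submission
  imports Defs
begin

text \<open>Write N = n1 m1 + r1 = n2 m2 + r2. Then r1 - r2 = m k with k = n2 \<Gamma>2 - n1 \<Gamma>1, so the
  quotient q21 computed by Algorithm 2 equals k + e, where e = (\<Delta>r1 - \<Delta>r2)/m lies in
  [-\<sigma>j/2, \<sigma>j/2). Since N < X, the folding integers are bounded by the maximal n of the
  search sets, so k = |n2 \<Gamma>2|_\<Gamma>1 lies in S_{2,n} when k \<ge> 0, and -k = |n1 \<Gamma>1|_\<Gamma>2 lies in
  S_{1,n} when k \<le> 0. Distinct elements of these sets are at least \<sigma>j apart, hence k is the
  only candidate in the window around q21 and the algorithm selects it. Multiplying by the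
  modular inverse recovers one folding integer, and rounding recovers the other because
  |e| < \<Gamma>1/2. At N = X with exact remainders one folding integer exceeds the bound by one,
  whereas every output of the algorithm decodes an element of the search set.\<close>

lemma euc_nonneg: "0 < G1 \<Longrightarrow> 0 < G2 \<Longrightarrow> 0 \<le> euc G1 G2 n"
  by (induction G1 G2 n rule: euc.induct) (auto simp: mod_int_pos_iff)

lemma euc_nonzero_below:
  assumes "euc G1 G2 N \<noteq> 0" "euc G1 G2 (Suc N) \<noteq> 0" "n \<le> Suc N"
  shows "euc G1 G2 n \<noteq> 0"
  using assms
proof (induction N arbitrary: n)
  case 0
  then show ?case by (cases n) auto
next
  case (Suc N)
  have "euc G1 G2 N \<noteq> 0" using Suc.prems(2) by auto
  then show ?case using Suc.IH[of n] Suc.prems by (cases "n = Suc (Suc N)") auto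
qed

lemma sigma_Suc_less: "0 < sigma G1 G2 i \<Longrightarrow> sigma G1 G2 (Suc i) < sigma G1 G2 i"
  by (simp add: sigma_def)

lemma sigma_one: "sigma G1 G2 1 = G2 mod G1"
  by (simp add: sigma_def numeral_2_eq_2)

lemma sigma_range:
  assumes "0 < G1" "0 < G2" "sigma G1 G2 K > 1" "sigma G1 G2 (K + 1) = 1" "1 \<le> j" "j \<le> K + 1"
  shows "0 < sigma G1 G2 j" "sigma G1 G2 j \<le> G2 mod G1"
proof -
  have pos: "0 < sigma G1 G2 i" if "i \<le> K + 1" for i
  proof -
    have "euc G1 G2 (Suc i) \<noteq> 0"
      by (rule euc_nonzero_below[of _ _ "Suc K"]) (use assms(3,4) that in \<open>auto simp: sigma_def\<close>)
    then show ?thesis using euc_nonneg[OF assms(1,2)] by (simp add: sigma_def order_less_le)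
  qed
  show "0 < sigma G1 G2 j" using pos assms(6) .
  have "sigma G1 G2 j \<le> sigma G1 G2 1" using assms(5,6)
  proof (induction j rule: nat_induct_at_least)
    case (Suc i) then show ?case using sigma_Suc_less[OF pos[of i]] by simp
  qed simp
  then show "sigma G1 G2 j \<le> G2 mod G1" by (metis sigma_one)
qed

lemma mindist_le:
  assumes "finite S" "x \<in> S" "y \<in> S" "x \<noteq> y"
  shows "mindist S \<le> \<bar>x - y\<bar>"
proof -
  have "{\<bar>x - y\<bar> | x y. x \<in> S \<and> y \<in> S \<and> x \<noteq> y} \<subseteq> (\<lambda>(x, y). \<bar>x - y\<bar>) ` (S \<times> S)"
    by auto
  then have "finite {\<bar>x - y\<bar> | x y. x \<in> S \<and> y \<in> S \<and> x \<noteq> y}"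
    using assms(1) finite_subset by blast
  then show ?thesis unfolding mindist_def using assms by (intro Min_le) auto
qed

lemma mindist_pair: "0 < d \<Longrightarrow> mindist {0, d} = d"
proof -
  assume "0 < d"
  then have "{\<bar>x - y\<bar> | x y. x \<in> {0, d} \<and> y \<in> {0, d} \<and> x \<noteq> y} = {d}"
    by (auto; force)
  then show ?thesis unfolding mindist_def by simp
qed

lemma finite_S2: "0 < G1 \<Longrightarrow> finite (S2 G1 G2 n)"
  by (rule finite_subset[of _ "{0..<G1}"]) (auto simp: S2_def)

lemma finite_S1: "0 < G2 \<Longrightarrow> finite (S1 G1 G2 n)"
  by (rule finite_subset[of _ "{0..<G2}"]) (auto simp: S1_def)

lemma S2_one: "S2 G1 G2 1 = {0, G2 mod G1}"
proof -
  have "\<And>t::int. 0 \<le> t \<and> t \<le> 1 \<longleftrightarrow> t = 0 \<or> t = 1" by auto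
  then show ?thesis unfolding S2_def by (auto intro: exI[of _ 0] exI[of _ 1])
qed

lemma S1_one: "S1 G1 G2 1 = {0, G1 mod G2}"
proof -
  have "\<And>t::int. 0 \<le> t \<and> t \<le> 1 \<longleftrightarrow> t = 0 \<or> t = 1" by auto
  then show ?thesis unfolding S1_def by (auto intro: exI[of _ 0] exI[of _ 1])
qed

lemma S2_memI:
  assumes "0 \<le> t" "t \<le> n" "0 \<le> t * G2 - u * G1" "t * G2 - u * G1 < G1"
  shows "t * G2 - u * G1 \<in> S2 G1 G2 n"
proof -
  have "(t * G2) mod G1 = (t * G2 - u * G1) mod G1" by (simp add: mod_diff_eq[symmetric])
  also have "\<dots> = t * G2 - u * G1" using assms(3,4) by simp
  finally have "(t * G2) mod G1 = t * G2 - u * G1" .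
  moreover have "(t * G2) mod G1 \<in> S2 G1 G2 n" using assms(1,2) unfolding S2_def by blast
  ultimately show ?thesis by simp
qed

lemma S1_memI:
  assumes "0 \<le> u" "u \<le> n" "0 \<le> u * G1 - t * G2" "u * G1 - t * G2 < G2"
  shows "u * G1 - t * G2 \<in> S1 G1 G2 n"
proof -
  have "(u * G1) mod G2 = (u * G1 - t * G2) mod G2" by (simp add: mod_diff_eq[symmetric])
  also have "\<dots> = u * G1 - t * G2" using assms(3,4) by simp
  finally have "(u * G1) mod G2 = u * G1 - t * G2" .
  moreover have "(u * G1) mod G2 \<in> S1 G1 G2 n" using assms(1,2) unfolding S1_def by blast
  ultimately show ?thesis by simp
qed

lemma inv_mod_prop:
  assumes "coprime a b" "1 < b"
  shows "0 \<le> inv_mod a b \<and> inv_mod a b < b \<and> [a * inv_mod a b = 1] (mod b)"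
proof -
  obtain x where "[a * x = 1] (mod b)" using cong_solve_coprime_int[OF assms(1)] by blast
  then have "[a * (x mod b) = 1] (mod b)" by (metis cong_def mod_mult_right_eq)
  then have "\<exists>g. 0 \<le> g \<and> g < b \<and> [a * g = 1] (mod b)" using assms(2)
    by (intro exI[of _ "x mod b"]) auto
  then show ?thesis unfolding inv_mod_def by (rule someI_ex)
qed

lemma inv_mod_decode:
  assumes "coprime a b" "1 < b" "[x = t * a] (mod b)" "0 \<le> t" "t < b"
  shows "(x * inv_mod a b) mod b = t"
proof -
  have "[x * inv_mod a b = t * (a * inv_mod a b)] (mod b)"
    using cong_scalar_right[OF assms(3)] by (simp add: mult.assoc)
  also have "[t * (a * inv_mod a b) = t * 1] (mod b)"
    using inv_mod_prop[OF assms(1,2)] by (intro cong_scalar_left) blast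
  finally show ?thesis using assms(4,5) unfolding cong_def by simp
qed

lemma S2_decode_le:
  assumes "coprime G1 G2" "1 < G1" "n < G1" "x \<in> S2 G1 G2 n"
  shows "(x * inv_mod G2 G1) mod G1 \<le> n"
proof -
  obtain t where "0 \<le> t" "t \<le> n" "x = (t * G2) mod G1" using assms(4) unfolding S2_def by blast
  moreover have "coprime G2 G1" using assms(1) by (simp add: coprime_commute)
  ultimately show ?thesis using inv_mod_decode[of G2 G1 x t] assms(2,3) by (simp add: cong_def)
qed

lemma S1_decode_le:
  assumes "coprime G1 G2" "1 < G2" "n < G2" "x \<in> S1 G1 G2 n"
  shows "(x * inv_mod G1 G2) mod G2 \<le> n"
proof -
  obtain t where "0 \<le> t" "t \<le> n" "x = (t * G1) mod G2" using assms(4) unfolding S1_def by blast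
  then show ?thesis using inv_mod_decode[of G1 G2 x t] assms by (simp add: cong_def)
qed

lemma bracket_div:
  fixes d e :: real
  assumes "0 < d" "- d < 2 * e" "2 * e \<le> d"
  shows "bracket ((of_int n * d - e) / d) = n"
proof -
  have "(of_int n * d - e) / d + 1/2 = of_int n + (d - 2 * e) / (2 * d)"
    using assms(1) by (simp add: field_simps)
  moreover have "0 \<le> (d - 2 * e) / (2 * d)" "(d - 2 * e) / (2 * d) < 1"
    using assms by (simp_all add: divide_less_eq)
  ultimately show ?thesis unfolding bracket_def by (simp add: floor_eq_iff)
qed

lemma finite_choice_or_nearest:
  fixes S :: "int set" and c :: real
  assumes "finite S" "S \<noteq> {}"
  shows "\<exists>x\<in>S. if \<exists>y\<in>S. P y then P x else \<forall>y\<in>S. \<bar>c - x\<bar> \<le> \<bar>c - y\<bar>"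
proof (cases "\<exists>y\<in>S. P y")
  case False
  let ?x = "arg_min_on (\<lambda>y. \<bar>c - of_int y\<bar>) S"
  have "?x \<in> S" "\<forall>y\<in>S. \<bar>c - ?x\<bar> \<le> \<bar>c - y\<bar>"
    using arg_min_if_finite[OF assms, of "\<lambda>y. \<bar>c - of_int y\<bar>"] by (auto simp: not_less)
  then show ?thesis using False by auto
qed auto

lemma div_le_if_less_mult:
  fixes N d a :: int
  assumes "0 < d" "N < (1 + a) * d"
  shows "N div d \<le> a"
proof -
  have "N div d * d \<le> N" using assms(1) minus_div_mult_eq_mod[of N d] pos_mod_sign[of d N] by linarith
  then have "N div d * d < (1 + a) * d" using assms(2) by linarith
  then show ?thesis using assms(1) mult_less_cancel_right_pos by fastforce
qed

text \<open>Of the hypotheses on the Euclidean sequence only 0 < \<sigma>j \<le> \<sigma>1 = \<Gamma>2 mod \<Gamma>1 is needed: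
  since S_{2,1} = {0, \<sigma>1} and S_{1,1} = {0, \<Gamma>1}, it makes n = 1 a witness for the maxima
  defining nn2 and nn1.\<close>

locale two_moduli =
  fixes m G1 G2 :: int and j :: nat
  assumes m_pos: "0 < m" and coprime_G1_G2: "coprime G1 G2"
    and G1_gt_1: "1 < G1" and G1_less_G2: "G1 < G2"
    and sigma_pos: "0 < sigma G1 G2 j" and sigma_le: "sigma G1 G2 j \<le> G2 mod G1"
begin

abbreviation s :: int where "s \<equiv> sigma G1 G2 j"
abbreviation A :: "int set" where "A \<equiv> S2 G1 G2 (nn2 G1 G2 j)"
abbreviation B :: "int set" where "B \<equiv> S1 G1 G2 (nn1 G1 G2 j)"
abbreviation q21 :: "int \<Rightarrow> int \<Rightarrow> real" where
  "q21 r1t r2t \<equiv> real_of_int (r1t - r2t) / real_of_int m"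

lemma s_less_G1: "s < G1"
  using sigma_le pos_mod_bound[of G1 G2] G1_gt_1 by linarith

lemma nn2_bounds: "1 \<le> nn2 G1 G2 j" "nn2 G1 G2 j < G1" "s \<le> mindist A"
proof -
  let ?T = "{n. 1 \<le> n \<and> n < G1 \<and> s \<le> mindist (S2 G1 G2 n)}"
  have "finite ?T" by (rule finite_subset[of _ "{1..<G1}"]) auto
  moreover have "1 \<in> ?T" using G1_gt_1 sigma_pos sigma_le by (simp add: S2_one mindist_pair)
  ultimately have "nn2 G1 G2 j \<in> ?T" unfolding nn2_def by (intro Max_in) auto
  then show "1 \<le> nn2 G1 G2 j" "nn2 G1 G2 j < G1" "s \<le> mindist A" by auto
qed

lemma nn1_bounds: "1 \<le> nn1 G1 G2 j" "nn1 G1 G2 j < G2" "s \<le> mindist B"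
proof -
  let ?T = "{n. 1 \<le> n \<and> n < G2 \<and> s \<le> mindist (S1 G1 G2 n)}"
  have "finite ?T" by (rule finite_subset[of _ "{1..<G2}"]) auto
  moreover have "1 \<in> ?T" using G1_gt_1 G1_less_G2 sigma_pos s_less_G1 by (simp add: S1_one mindist_pair)
  ultimately have "nn1 G1 G2 j \<in> ?T" unfolding nn1_def by (intro Max_in) auto
  then show "1 \<le> nn1 G1 G2 j" "nn1 G1 G2 j < G2" "s \<le> mindist B" by auto
qed

lemma zero_in_A: "0 \<in> A"
  using nn2_bounds(1) unfolding S2_def by force

lemma zero_in_B: "0 \<in> B"
  using nn1_bounds(1) unfolding S1_def by force

lemma A_close_eq:
  assumes "x \<in> A" "y \<in> A" "\<bar>real_of_int x - real_of_int y\<bar> < real_of_int s"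
  shows "x = y"
proof (rule ccontr)
  assume "x \<noteq> y"
  then have "s \<le> \<bar>x - y\<bar>"
    using mindist_le[OF finite_S2 assms(1,2)] nn2_bounds(3) G1_gt_1 by fastforce
  then show False using assms(3) by linarith
qed

lemma B_close_eq:
  assumes "x \<in> B" "y \<in> B" "\<bar>real_of_int x - real_of_int y\<bar> < real_of_int s"
  shows "x = y"
proof (rule ccontr)
  assume "x \<noteq> y"
  then have "s \<le> \<bar>x - y\<bar>"
    using mindist_le[OF finite_S1 assms(1,2)] nn1_bounds(3) G1_gt_1 G1_less_G2 by fastforce
  then show False using assms(3) by linarith
qed

lemma alg2_exists: "\<exists>out. alg2 m G1 G2 j r1t r2t out"
proof -
  let ?q = "q21 r1t r2t" and ?s = "real_of_int s"
  have ne: "finite A" "A \<noteq> {}" "finite B" "B \<noteq> {}"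
    using finite_S2 finite_S1 zero_in_A zero_in_B G1_gt_1 G1_less_G2 by auto
  obtain s2 where s2: "s2 \<in> A" "if \<exists>x\<in>A. - ?s / 2 \<le> ?q - x \<and> ?q - x < ?s / 2
      then - ?s / 2 \<le> ?q - s2 \<and> ?q - s2 < ?s / 2 else \<forall>y\<in>A. \<bar>?q - s2\<bar> \<le> \<bar>?q - y\<bar>"
    using finite_choice_or_nearest[OF ne(1,2)] by blast
  obtain s1 where s1: "s1 \<in> B" "if \<exists>y\<in>B. - ?s / 2 \<le> ?q + y \<and> ?q + y < ?s / 2
      then - ?s / 2 \<le> ?q + s1 \<and> ?q + s1 < ?s / 2 else \<forall>y\<in>B. \<bar>- ?q - s1\<bar> \<le> \<bar>- ?q - y\<bar>"
    using finite_choice_or_nearest[OF ne(3,4)] by blast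
  consider "?s / 2 \<le> ?q" | "?q < - ?s / 2" | "- ?s / 2 \<le> ?q \<and> ?q < ?s / 2" by linarith
  then show ?thesis
  proof cases
    case 1
    let ?n2 = "(s2 * inv_mod G2 G1) mod G1"
    have "alg2 m G1 G2 j r1t r2t
        (bracket (real_of_int (?n2 * (m * G2) + r2t - r1t) / real_of_int (m * G1)), ?n2)"
      unfolding alg2_def Let_def fst_conv snd_conv using 1 s2 by blast
    then show ?thesis by blast
  next
    case 2
    let ?n1 = "(s1 * inv_mod G1 G2) mod G2"
    have "alg2 m G1 G2 j r1t r2t
        (?n1, bracket (real_of_int (?n1 * (m * G1) + r1t - r2t) / real_of_int (m * G2)))"
      unfolding alg2_def Let_def fst_conv snd_conv using 2 s1 by blast
    then show ?thesis by blast
  next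
    case 3
    then have "alg2 m G1 G2 j r1t r2t (0, 0)" unfolding alg2_def Let_def by auto
    then show ?thesis by blast
  qed
qed

definition fold_gap :: "int \<Rightarrow> int" where
  "fold_gap N = N div (m * G2) * G2 - N div (m * G1) * G1"

lemma remainder_diff_eq: "N mod (m * G1) - N mod (m * G2) = m * fold_gap N"
  unfolding fold_gap_def minus_div_mult_eq_mod[symmetric] by (simp add: algebra_simps)

lemma fold_gap_bounds: "- G2 < fold_gap N" "fold_gap N < G1"
proof -
  have "0 \<le> N mod (m * G1)" "N mod (m * G1) < m * G1" "0 \<le> N mod (m * G2)" "N mod (m * G2) < m * G2"
    using m_pos G1_gt_1 G1_less_G2 by simp_all
  then have "m * - G2 < m * fold_gap N" "m * fold_gap N < m * G1"
    using remainder_diff_eq[of N] by simp_all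
  then show "- G2 < fold_gap N" "fold_gap N < G1"
    using m_pos mult_less_cancel_left_pos by blast+
qed

lemma q21_split:
  assumes "admissible m G1 G2 j N r1t r2t"
  obtains e :: real
  where "q21 r1t r2t = fold_gap N + e" "- real_of_int s / 2 \<le> e" "e < real_of_int s / 2"
proof -
  define e where "e = real_of_int ((r1t - N mod (m * G1)) - (r2t - N mod (m * G2))) / real_of_int m"
  have "- real_of_int s / 2 \<le> e" "e < real_of_int s / 2"
    using assms unfolding admissible_def Let_def e_def by auto
  moreover have "r1t - r2t = m * fold_gap N + ((r1t - N mod (m * G1)) - (r2t - N mod (m * G2)))"
    using remainder_diff_eq[of N] by simp
  then have "q21 r1t r2t = fold_gap N + e" using m_pos unfolding e_def by (simp add: field_simps)
  ultimately show ?thesis using that by blast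
qed

lemma folding_integers_le:
  assumes "N < bigX m G1 G2 j"
  shows "N div (m * G2) \<le> nn2 G1 G2 j" "N div (m * G1) \<le> nn1 G1 G2 j"
  using div_le_if_less_mult[of "m * G2" N "nn2 G1 G2 j"] div_le_if_less_mult[of "m * G1" N "nn1 G1 G2 j"]
    assms m_pos G1_gt_1 G1_less_G2 unfolding bigX_def by (simp_all add: ac_simps)

lemma fold_gap_in_A:
  assumes "0 \<le> N" "N < bigX m G1 G2 j" "0 \<le> fold_gap N"
  shows "fold_gap N \<in> A"
  unfolding fold_gap_def
proof (rule S2_memI)
  show "0 \<le> N div (m * G2)" using assms(1) m_pos G1_gt_1 G1_less_G2 by (simp add: pos_imp_zdiv_nonneg_iff)
qed (use folding_integers_le(1)[OF assms(2)] assms(3) fold_gap_bounds(2)[of N] in \<open>simp_all add: fold_gap_def\<close>)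

lemma neg_fold_gap_in_B:
  assumes "0 \<le> N" "N < bigX m G1 G2 j" "fold_gap N \<le> 0"
  shows "- fold_gap N \<in> B"
  unfolding fold_gap_def minus_diff_eq
proof (rule S1_memI)
  show "0 \<le> N div (m * G1)" using assms(1) m_pos G1_gt_1 by (simp add: pos_imp_zdiv_nonneg_iff)
qed (use folding_integers_le(2)[OF assms(2)] assms(3) fold_gap_bounds(1)[of N] in \<open>simp_all add: fold_gap_def\<close>)

lemma alg2_upper_branch:
  assumes "alg2 m G1 G2 j r1t r2t out" "real_of_int s / 2 \<le> q21 r1t r2t"
  obtains s2 where "s2 \<in> A"
    "(\<exists>x\<in>A. - real_of_int s / 2 \<le> q21 r1t r2t - x \<and> q21 r1t r2t - x < real_of_int s / 2) \<longrightarrow>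
      - real_of_int s / 2 \<le> q21 r1t r2t - s2 \<and> q21 r1t r2t - s2 < real_of_int s / 2"
    "snd out = (s2 * inv_mod G2 G1) mod G1"
    "fst out = bracket (real_of_int (snd out * (m * G2) + r2t - r1t) / real_of_int (m * G1))"
proof -
  have "\<not> q21 r1t r2t < - real_of_int s / 2" "\<not> q21 r1t r2t < real_of_int s / 2"
    using assms(2) sigma_pos by linarith+
  then show ?thesis using assms(1) that unfolding alg2_def Let_def by (smt (verit))
qed

lemma alg2_lower_branch:
  assumes "alg2 m G1 G2 j r1t r2t out" "q21 r1t r2t < - real_of_int s / 2"
  obtains s1 where "s1 \<in> B"
    "(\<exists>y\<in>B. - real_of_int s / 2 \<le> q21 r1t r2t + y \<and> q21 r1t r2t + y < real_of_int s / 2) \<longrightarrow>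
      - real_of_int s / 2 \<le> q21 r1t r2t + s1 \<and> q21 r1t r2t + s1 < real_of_int s / 2"
    "fst out = (s1 * inv_mod G1 G2) mod G2"
    "snd out = bracket (real_of_int (fst out * (m * G1) + r1t - r2t) / real_of_int (m * G2))"
proof -
  have "\<not> real_of_int s / 2 \<le> q21 r1t r2t" "\<not> - real_of_int s / 2 \<le> q21 r1t r2t"
    using assms(2) sigma_pos by linarith+
  then show ?thesis using assms(1) that unfolding alg2_def Let_def by (smt (verit))
qed

lemma alg2_middle_branch:
  assumes "alg2 m G1 G2 j r1t r2t out"
    and "- real_of_int s / 2 \<le> q21 r1t r2t" "q21 r1t r2t < real_of_int s / 2"
  shows "out = (0, 0)"
  using assms unfolding alg2_def Let_def by auto

lemma folding_integers_range:
  assumes "0 \<le> N" "N < bigX m G1 G2 j"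
  shows "0 \<le> N div (m * G1)" "N div (m * G1) < G2" "0 \<le> N div (m * G2)" "N div (m * G2) < G1"
  using assms m_pos G1_gt_1 G1_less_G2 folding_integers_le[OF assms(2)] nn1_bounds(2) nn2_bounds(2)
  by (simp_all add: pos_imp_zdiv_nonneg_iff)

lemma fold_gap_decodes:
  assumes "0 \<le> N" "N < bigX m G1 G2 j"
  shows "(fold_gap N * inv_mod G2 G1) mod G1 = N div (m * G2)"
    and "((- fold_gap N) * inv_mod G1 G2) mod G2 = N div (m * G1)"
proof -
  have "[fold_gap N = N div (m * G2) * G2] (mod G1)" "[- fold_gap N = N div (m * G1) * G1] (mod G2)"
    unfolding fold_gap_def cong_def by (simp_all add: mod_diff_eq[symmetric])
  then show "(fold_gap N * inv_mod G2 G1) mod G1 = N div (m * G2)"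
    and "((- fold_gap N) * inv_mod G1 G2) mod G2 = N div (m * G1)"
    using inv_mod_decode[of G2 G1 "fold_gap N"] inv_mod_decode[of G1 G2 "- fold_gap N"]
      coprime_G1_G2 G1_gt_1 G1_less_G2 folding_integers_range[OF assms]
    by (simp_all add: coprime_commute)
qed

lemma rounding_recovers:
  fixes e :: real
  assumes "q21 r1t r2t = fold_gap N + e" "- real_of_int s / 2 \<le> e" "e < real_of_int s / 2"
  shows "bracket (real_of_int (N div (m * G2) * (m * G2) + r2t - r1t) / real_of_int (m * G1))
      = N div (m * G1)"
    and "bracket (real_of_int (N div (m * G1) * (m * G1) + r1t - r2t) / real_of_int (m * G2))
      = N div (m * G2)"
proof -
  define n1 n2 where "n1 = N div (m * G1)" and "n2 = N div (m * G2)"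
  have gap: "fold_gap N = n2 * G2 - n1 * G1" unfolding fold_gap_def n1_def n2_def ..
  have "real_of_int (r1t - r2t) = m * (fold_gap N + e)" using assms(1) m_pos by (simp add: field_simps)
  then have "real_of_int (n2 * (m * G2) + r2t - r1t) = m * (n1 * G1 - e)"
    and "real_of_int (n1 * (m * G1) + r1t - r2t) = m * (n2 * G2 - (- e))"
    unfolding gap by (simp_all add: algebra_simps)
  then have "real_of_int (n2 * (m * G2) + r2t - r1t) / real_of_int (m * G1) = (n1 * G1 - e) / G1"
    and "real_of_int (n1 * (m * G1) + r1t - r2t) / real_of_int (m * G2) = (n2 * G2 - (- e)) / G2"
    using m_pos by simp_all
  moreover have "real_of_int s < G1" "real_of_int s < G2" using s_less_G1 G1_less_G2 by simp_all
  ultimately show "bracket (real_of_int (n2 * (m * G2) + r2t - r1t) / real_of_int (m * G1)) = n1"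
    and "bracket (real_of_int (n1 * (m * G1) + r1t - r2t) / real_of_int (m * G2)) = n2"
    using assms(2,3) G1_gt_1 G1_less_G2 bracket_div[of "real_of_int G1" e n1]
      bracket_div[of "real_of_int G2" "- e" n2] by simp_all
qed

lemma alg2_correct_upper:
  assumes "0 \<le> N" "N < bigX m G1 G2 j" "admissible m G1 G2 j N r1t r2t"
    and "alg2 m G1 G2 j r1t r2t out" "real_of_int s / 2 \<le> q21 r1t r2t"
  shows "out = (N div (m * G1), N div (m * G2))"
proof -
  obtain e :: real where q: "q21 r1t r2t = fold_gap N + e"
    and e: "- real_of_int s / 2 \<le> e" "e < real_of_int s / 2"
    using q21_split[OF assms(3)] .
  have "0 < real_of_int (fold_gap N)" using q e assms(5) by linarith
  then have gap_A: "fold_gap N \<in> A" using fold_gap_in_A[OF assms(1,2)] by simp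
  obtain s2 where s2: "s2 \<in> A"
      "(\<exists>x\<in>A. - real_of_int s / 2 \<le> q21 r1t r2t - x \<and> q21 r1t r2t - x < real_of_int s / 2) \<longrightarrow>
        - real_of_int s / 2 \<le> q21 r1t r2t - s2 \<and> q21 r1t r2t - s2 < real_of_int s / 2"
      "snd out = (s2 * inv_mod G2 G1) mod G1"
      "fst out = bracket (real_of_int (snd out * (m * G2) + r2t - r1t) / real_of_int (m * G1))"
    using alg2_upper_branch[OF assms(4,5)] by blast
  have "\<exists>x\<in>A. - real_of_int s / 2 \<le> q21 r1t r2t - x \<and> q21 r1t r2t - x < real_of_int s / 2"
    using gap_A q e by (intro bexI[of _ "fold_gap N"]) simp_all
  then have "- real_of_int s / 2 \<le> q21 r1t r2t - s2 \<and> q21 r1t r2t - s2 < real_of_int s / 2"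
    using s2(2) by blast
  then have "\<bar>real_of_int s2 - fold_gap N\<bar> < s" using q e unfolding abs_less_iff by linarith
  then have "s2 = fold_gap N" by (rule A_close_eq[OF s2(1) gap_A])
  then show ?thesis
    using s2(3,4) fold_gap_decodes(1)[OF assms(1,2)] rounding_recovers(1)[OF q e]
    by (simp add: prod_eq_iff)
qed

lemma alg2_correct_lower:
  assumes "0 \<le> N" "N < bigX m G1 G2 j" "admissible m G1 G2 j N r1t r2t"
    and "alg2 m G1 G2 j r1t r2t out" "q21 r1t r2t < - real_of_int s / 2"
  shows "out = (N div (m * G1), N div (m * G2))"
proof -
  obtain e :: real where q: "q21 r1t r2t = fold_gap N + e"
    and e: "- real_of_int s / 2 \<le> e" "e < real_of_int s / 2"
    using q21_split[OF assms(3)] .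
  have "real_of_int (fold_gap N) < 0" using q e assms(5) by linarith
  then have gap_B: "- fold_gap N \<in> B" using neg_fold_gap_in_B[OF assms(1,2)] by simp
  obtain s1 where s1: "s1 \<in> B"
      "(\<exists>y\<in>B. - real_of_int s / 2 \<le> q21 r1t r2t + y \<and> q21 r1t r2t + y < real_of_int s / 2) \<longrightarrow>
        - real_of_int s / 2 \<le> q21 r1t r2t + s1 \<and> q21 r1t r2t + s1 < real_of_int s / 2"
      "fst out = (s1 * inv_mod G1 G2) mod G2"
      "snd out = bracket (real_of_int (fst out * (m * G1) + r1t - r2t) / real_of_int (m * G2))"
    using alg2_lower_branch[OF assms(4,5)] by blast
  have "\<exists>y\<in>B. - real_of_int s / 2 \<le> q21 r1t r2t + y \<and> q21 r1t r2t + y < real_of_int s / 2"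
    using gap_B q e by (intro bexI[of _ "- fold_gap N"]) simp_all
  then have "- real_of_int s / 2 \<le> q21 r1t r2t + s1 \<and> q21 r1t r2t + s1 < real_of_int s / 2"
    using s1(2) by blast
  then have "\<bar>real_of_int s1 - (- fold_gap N)\<bar> < s" using q e unfolding abs_less_iff by linarith
  then have "s1 = - fold_gap N" by (rule B_close_eq[OF s1(1) gap_B])
  then show ?thesis
    using s1(3,4) fold_gap_decodes(2)[OF assms(1,2)] rounding_recovers(2)[OF q e]
    by (simp add: prod_eq_iff)
qed

lemma alg2_correct_middle:
  assumes "0 \<le> N" "N < bigX m G1 G2 j" "admissible m G1 G2 j N r1t r2t"
    and "alg2 m G1 G2 j r1t r2t out"
    and "- real_of_int s / 2 \<le> q21 r1t r2t" "q21 r1t r2t < real_of_int s / 2"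
  shows "out = (N div (m * G1), N div (m * G2))"
proof -
  obtain e :: real where q: "q21 r1t r2t = fold_gap N + e"
    and e: "- real_of_int s / 2 \<le> e" "e < real_of_int s / 2"
    using q21_split[OF assms(3)] .
  define n1 n2 where "n1 = N div (m * G1)" and "n2 = N div (m * G2)"
  note range = folding_integers_range[OF assms(1,2), folded n1_def n2_def]
  \<comment> \<open>0 and the gap both lie in the window around q21, which meets A and B in at most one point.\<close>
  have close: "\<bar>real_of_int (fold_gap N) - 0\<bar> < s" using q e assms(5,6) unfolding abs_less_iff by linarith
  have "fold_gap N = 0"
  proof (cases "0 \<le> fold_gap N")
    case True
    then show ?thesis using A_close_eq[OF fold_gap_in_A[OF assms(1,2) True] zero_in_A] close by simp
  next
    case False
    then show ?thesis using B_close_eq[OF neg_fold_gap_in_B[OF assms(1,2)] zero_in_B] close by simp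
  qed
  then have eq: "n2 * G2 = n1 * G1" unfolding fold_gap_def n1_def n2_def by simp
  then have "G1 dvd n2" using coprime_G1_G2 by (metis coprime_dvd_mult_left_iff dvd_triv_right)
  then have "n2 = 0" using range zdvd_imp_le by fastforce
  moreover have "n1 = 0" using eq G1_gt_1 \<open>n2 = 0\<close> by simp
  ultimately show ?thesis using alg2_middle_branch[OF assms(4-6)] unfolding n1_def n2_def by simp
qed

theorem alg2_recovers_folding_integers:
  assumes "0 \<le> N" "N < bigX m G1 G2 j" "admissible m G1 G2 j N r1t r2t"
    and "alg2 m G1 G2 j r1t r2t out"
  shows "out = (N div (m * G1), N div (m * G2))"
  using alg2_correct_upper[OF assms] alg2_correct_lower[OF assms] alg2_correct_middle[OF assms]
  by linarith

lemma admissible_exact_remainders: "admissible m G1 G2 j N (N mod (m * G1)) (N mod (m * G2))"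
  using m_pos G1_gt_1 G1_less_G2 sigma_pos unfolding admissible_def Let_def by simp

lemma alg2_snd_le_nn2:
  assumes "alg2 m G1 G2 j r1t r2t out" "0 \<le> q21 r1t r2t"
  shows "snd out \<le> nn2 G1 G2 j"
proof (cases "real_of_int s / 2 \<le> q21 r1t r2t")
  case True
  then obtain s2 where "s2 \<in> A" "snd out = (s2 * inv_mod G2 G1) mod G1"
    using alg2_upper_branch[OF assms(1)] by blast
  then show ?thesis using S2_decode_le coprime_G1_G2 G1_gt_1 nn2_bounds(2) by simp
next
  case False
  moreover have "- real_of_int s / 2 \<le> q21 r1t r2t" using assms(2) sigma_pos by linarith
  ultimately show ?thesis using alg2_middle_branch[OF assms(1)] nn2_bounds(1) by simp
qed

lemma alg2_fst_le_nn1: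
  assumes "alg2 m G1 G2 j r1t r2t out" "q21 r1t r2t \<le> 0"
  shows "fst out \<le> nn1 G1 G2 j"
proof (cases "q21 r1t r2t < - real_of_int s / 2")
  case True
  then obtain s1 where "s1 \<in> B" "fst out = (s1 * inv_mod G1 G2) mod G2"
    using alg2_lower_branch[OF assms(1)] by blast
  then show ?thesis using S1_decode_le coprime_G1_G2 G1_gt_1 G1_less_G2 nn1_bounds(2) by simp
next
  case False
  moreover have "q21 r1t r2t < real_of_int s / 2" using assms(2) sigma_pos by linarith
  ultimately show ?thesis using alg2_middle_branch[OF assms(1)] nn1_bounds(1) by simp
qed

theorem alg2_fails_at_bigX:
  defines "X \<equiv> bigX m G1 G2 j"
  shows "\<exists>r1t r2t. admissible m G1 G2 j X r1t r2t \<and> (\<exists>out. alg2 m G1 G2 j r1t r2t out)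
    \<and> (\<forall>out. alg2 m G1 G2 j r1t r2t out \<longrightarrow> out \<noteq> (X div (m * G1), X div (m * G2)))"
proof -
  let ?r1 = "X mod (m * G1)" and ?r2 = "X mod (m * G2)"
  have "out \<noteq> (X div (m * G1), X div (m * G2))" if out: "alg2 m G1 G2 j ?r1 ?r2 out" for out
  proof (cases "m * G2 * (1 + nn2 G1 G2 j) \<le> m * G1 * (1 + nn1 G1 G2 j)")
    case True
    then have "X = (1 + nn2 G1 G2 j) * (m * G2)" unfolding X_def bigX_def by (simp add: ac_simps)
    then have "X div (m * G2) = 1 + nn2 G1 G2 j" "?r2 = 0" using m_pos G1_gt_1 G1_less_G2 by simp_all
    moreover have "0 \<le> ?r1" using m_pos G1_gt_1 by simp
    ultimately show ?thesis using alg2_snd_le_nn2[OF out] m_pos by fastforce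
  next
    case False
    then have "X = (1 + nn1 G1 G2 j) * (m * G1)" unfolding X_def bigX_def by (simp add: ac_simps)
    then have "X div (m * G1) = 1 + nn1 G1 G2 j" "?r1 = 0" using m_pos G1_gt_1 by simp_all
    moreover have "0 \<le> ?r2" using m_pos G1_gt_1 G1_less_G2 by simp
    ultimately show ?thesis using alg2_fst_le_nn1[OF out] m_pos by fastforce
  qed
  then show ?thesis using admissible_exact_remainders alg2_exists by blast
qed

end

theorem theorem2:
  fixes m G1 G2 :: int and j K :: nat
  assumes "m \<ge> 1" and "coprime G1 G2" and "1 < G1" and "G1 < G2"
    and "sigma G1 G2 K > 1" and "sigma G1 G2 (K + 1) = 1"
    and "1 \<le> j" and "j \<le> K + 1"
  shows "(\<forall>N r1t r2t. 0 \<le> N \<and> N < bigX m G1 G2 j \<and> admissible m G1 G2 j N r1t r2t \<longrightarrow>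
            (\<forall>out. alg2 m G1 G2 j r1t r2t out \<longrightarrow>
                 out = (N div (m * G1), N div (m * G2))))
       \<and> (\<exists>r1t r2t. admissible m G1 G2 j (bigX m G1 G2 j) r1t r2t
            \<and> (\<exists>out. alg2 m G1 G2 j r1t r2t out)
            \<and> (\<forall>out. alg2 m G1 G2 j r1t r2t out \<longrightarrow>
                 out \<noteq> (bigX m G1 G2 j div (m * G1), bigX m G1 G2 j div (m * G2))))"
proof -
  have "0 < G1" "0 < G2" using assms(3,4) by simp_all
  then interpret two_moduli m G1 G2 j
    using assms sigma_range[of G1 G2 K j] by unfold_locales simp_all
  show ?thesis using alg2_recovers_folding_integers alg2_fails_at_bigX by blast
qed

end
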